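(* Let $G$ be a finitely generated torsion-free nilpotent group. Then $G$ has a nontrivial abelian direct factor if and only if the image of the center $Z(G)$ in the abelianization $G/[G,G]$ contains a primitive element.
   Context: An element of a finitely generated abelian group $A$ is primitive if its image in the free abelian group $A/\mathrm{Tor}(A)$ is part of a basis of $A/\mathrm{Tor}(A)$, where $\mathrm{Tor}(A)$ is the torsion subgroup. *)

theory Defs
  imports "HOL-Algebra.Algebra"
begin

definition fin_gen_group :: "('a, 'b) monoid_scheme \<Rightarrow> bool" where
  "fin_gen_group G \<longleftrightarrow> (\<exists>S. finite S \<and> S \<subseteq> carrier G \<and> generate G S = carrier G)"

definition torsion_free :: "('a, 'b) monoid_scheme \<Rightarrow> bool" where
  "torsion_free G \<longleftrightarrow>
     (\<forall>x \<in> carrier G. \<forall>n::nat. n > 0 \<and> x [^]\<^bsub>G\<^esub> n = \<one>\<^bsub>G\<^esub> \<longrightarrow> x = \<one>\<^bsub>G\<^esub>)"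

definition commutator_subgroup :: "('a, 'b) monoid_scheme \<Rightarrow> 'a set \<Rightarrow> 'a set \<Rightarrow> 'a set" where
  "commutator_subgroup G H K =
     generate G {h \<otimes>\<^bsub>G\<^esub> k \<otimes>\<^bsub>G\<^esub> inv\<^bsub>G\<^esub> h \<otimes>\<^bsub>G\<^esub> inv\<^bsub>G\<^esub> k | h k. h \<in> H \<and> k \<in> K}"

definition lower_central :: "('a, 'b) monoid_scheme \<Rightarrow> nat \<Rightarrow> 'a set" where
  "lower_central G n = ((\<lambda>H. commutator_subgroup G H (carrier G)) ^^ n) (carrier G)"

definition nilpotent_group :: "('a, 'b) monoid_scheme \<Rightarrow> bool" where
  "nilpotent_group G \<longleftrightarrow> group G \<and> (\<exists>n. lower_central G n = {\<one>\<^bsub>G\<^esub>})"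

definition center :: "('a, 'b) monoid_scheme \<Rightarrow> 'a set" where
  "center G = {z \<in> carrier G. \<forall>g \<in> carrier G. z \<otimes>\<^bsub>G\<^esub> g = g \<otimes>\<^bsub>G\<^esub> z}"

definition abelianization :: "('a, 'b) monoid_scheme \<Rightarrow> 'a set monoid" where
  "abelianization G = G Mod (derived G (carrier G))"

definition torsion_subgroup :: "('a, 'b) monoid_scheme \<Rightarrow> 'a set" where
  "torsion_subgroup A = {x \<in> carrier A. \<exists>n::nat. n > 0 \<and> x [^]\<^bsub>A\<^esub> n = \<one>\<^bsub>A\<^esub>}"

definition abelian_basis :: "('a, 'b) monoid_scheme \<Rightarrow> 'a set \<Rightarrow> bool" where
  "abelian_basis Q B \<longleftrightarrow> B \<subseteq> carrier Q \<and> generate Q B = carrier Q \<and>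
     (\<forall>F (c :: 'a \<Rightarrow> int). finite F \<longrightarrow> F \<subseteq> B \<longrightarrow>
        finprod Q (\<lambda>b. b [^]\<^bsub>Q\<^esub> c b) F = \<one>\<^bsub>Q\<^esub> \<longrightarrow> (\<forall>b \<in> F. c b = 0))"

definition primitive_elem :: "('a, 'b) monoid_scheme \<Rightarrow> 'a \<Rightarrow> bool" where
  "primitive_elem A x \<longleftrightarrow> x \<in> carrier A \<and>
     (\<exists>B. abelian_basis (A Mod torsion_subgroup A) B \<and>
          torsion_subgroup A #>\<^bsub>A\<^esub> x \<in> B)"

definition has_nontrivial_abelian_direct_factor :: "('a, 'b) monoid_scheme \<Rightarrow> bool" where
  "has_nontrivial_abelian_direct_factor G \<longleftrightarrow>
     (\<exists>H K. H \<lhd> G \<and> K \<lhd> G \<and> H \<inter> K = {\<one>\<^bsub>G\<^esub>} \<and> H <#>\<^bsub>G\<^esub> K = carrier G \<and>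
            K \<noteq> {\<one>\<^bsub>G\<^esub>} \<and> comm_group (G\<lparr>carrier := K\<rparr>))"

end

theory Submission
  imports Defs
begin

text \<open>Both sides are equivalent to the existence of a central z and a homomorphism
  \<psi> : G \<rightarrow> \<int> with \<psi> z = 1.

  If G = H \<times> K with K nontrivial and abelian, then K is a finitely generated torsion-free
  abelian group, hence free; the coordinate of a basis element z of K, composed with the
  projection G \<rightarrow> K, is such a \<psi>, and z is central.  Conversely, such \<psi> and z split G as
  ker \<psi> \<times> \<langle>z\<rangle>.

  Every \<psi> : G \<rightarrow> \<int> factors through Q = G/[G,G]/Tor, a free abelian group of finite rank, and
  an element q of Q lies in a basis iff some homomorphism Q \<rightarrow> \<int> maps q to 1: a basis of the
  kernel together with q is a basis of Q.\<close>

section \<open>Integer linear combinations in abelian groups\<close>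

definition lincomb :: "('a, 'b) monoid_scheme \<Rightarrow> ('i \<Rightarrow> 'a) \<Rightarrow> ('i \<Rightarrow> int) \<Rightarrow> 'i set \<Rightarrow> 'a" where
  "lincomb G g c I = finprod G (\<lambda>i. g i [^]\<^bsub>G\<^esub> c i) I"

definition spans :: "('a, 'b) monoid_scheme \<Rightarrow> ('i \<Rightarrow> 'a) \<Rightarrow> 'i set \<Rightarrow> bool" where
  "spans G g I \<longleftrightarrow> (\<forall>x \<in> carrier G. \<exists>c. x = lincomb G g c I)"

definition lin_indep :: "('a, 'b) monoid_scheme \<Rightarrow> ('i \<Rightarrow> 'a) \<Rightarrow> 'i set \<Rightarrow> bool" where
  "lin_indep G g I \<longleftrightarrow> (\<forall>c. lincomb G g c I = \<one>\<^bsub>G\<^esub> \<longrightarrow> (\<forall>i \<in> I. c i = 0))"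

context comm_group
begin

lemma lincomb_closed [simp]: "g \<in> I \<rightarrow> carrier G \<Longrightarrow> lincomb G g c I \<in> carrier G"
  unfolding lincomb_def by (auto intro!: finprod_closed)

lemma lincomb_zero [simp]: "lincomb G g (\<lambda>i. 0) I = \<one>"
  unfolding lincomb_def by simp

lemma lincomb_add:
  assumes g: "g \<in> I \<rightarrow> carrier G"
  shows "lincomb G g (\<lambda>i. c i + d i) I = lincomb G g c I \<otimes> lincomb G g d I"
proof -
  have "lincomb G g (\<lambda>i. c i + d i) I = finprod G (\<lambda>i. g i [^] c i \<otimes> g i [^] d i) I"
    unfolding lincomb_def using g by (intro finprod_cong') (auto simp: int_pow_mult Pi_iff)
  also have "\<dots> = lincomb G g c I \<otimes> lincomb G g d I"
    unfolding lincomb_def using g by (intro finprod_multf) auto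
  finally show ?thesis .
qed

lemma lincomb_uminus:
  assumes g: "g \<in> I \<rightarrow> carrier G"
  shows "lincomb G g (\<lambda>i. - c i) I = inv (lincomb G g c I)"
proof -
  have "lincomb G g (\<lambda>i. - c i) I \<otimes> lincomb G g c I = \<one>"
    using lincomb_add[OF g, of "\<lambda>i. - c i" c] by simp
  with g show ?thesis by (simp add: inv_equality)
qed

lemma lincomb_diff_eq_one:
  assumes g: "g \<in> I \<rightarrow> carrier G" and eq: "lincomb G g c I = lincomb G g d I"
  shows "lincomb G g (\<lambda>i. c i - d i) I = \<one>"
  using lincomb_add[OF g, of c "\<lambda>i. - d i"] lincomb_uminus[OF g, of d] eq g by simp

lemma lincomb_cong:
  "\<lbrakk>\<And>i. i \<in> I \<Longrightarrow> c i = d i; \<And>i. i \<in> I \<Longrightarrow> g i = h i; h \<in> I \<rightarrow> carrier G\<rbrakk>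
     \<Longrightarrow> lincomb G g c I = lincomb G h d I"
  unfolding lincomb_def by (rule finprod_cong') auto

lemma lincomb_insert:
  "\<lbrakk>finite I; k \<notin> I; g \<in> insert k I \<rightarrow> carrier G\<rbrakk>
     \<Longrightarrow> lincomb G g c (insert k I) = g k [^] c k \<otimes> lincomb G g c I"
  unfolding lincomb_def by (subst finprod_insert) auto

lemma lincomb_remove:
  "\<lbrakk>finite I; k \<in> I; g \<in> I \<rightarrow> carrier G\<rbrakk>
     \<Longrightarrow> lincomb G g c I = g k [^] c k \<otimes> lincomb G g c (I - {k})"
  using lincomb_insert[of "I - {k}" k g c] by (simp add: insert_absorb)

lemma lincomb_unit_vector:
  assumes I: "finite I" "k \<in> I" and g: "g \<in> I \<rightarrow> carrier G"
  shows "lincomb G g (\<lambda>i. if i = k then 1 else 0) I = g k"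
proof -
  have "lincomb G g (\<lambda>i. if i = k then 1 else 0) (I - {k}) = lincomb G g (\<lambda>i. 0) (I - {k})"
    using g by (intro lincomb_cong) auto
  then show ?thesis
    using lincomb_remove[OF I g] I g by (auto simp: Pi_iff)
qed

lemma lincomb_extend:
  "\<lbrakk>finite J; I \<subseteq> J; g \<in> J \<rightarrow> carrier G\<rbrakk>
     \<Longrightarrow> lincomb G g c I = lincomb G g (\<lambda>i. if i \<in> I then c i else 0) J"
  unfolding lincomb_def by (rule finprod_mono_neutral_cong_left) auto

lemma lincomb_union:
  assumes F: "finite F" "finite F'" and g: "g \<in> F \<union> F' \<rightarrow> carrier G"
  shows "lincomb G g c F \<otimes> lincomb G g c' F' =
    lincomb G g (\<lambda>i. (if i \<in> F then c i else 0) + (if i \<in> F' then c' i else 0)) (F \<union> F')"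
proof -
  have E: "finite (F \<union> F')" using F by simp
  show ?thesis
    using lincomb_extend[OF E _ g, where I = F and c = c] lincomb_extend[OF E _ g, where I = F' and c = c']
    by (simp add: lincomb_add[OF g])
qed

lemma lincomb_in_subgroup:
  assumes H: "subgroup H G" and g: "g \<in> I \<rightarrow> H"
  shows "lincomb G g c I \<in> H"
proof (cases "finite I")
  case True
  then show ?thesis using g
  proof (induction I rule: finite_induct)
    case (insert k I)
    then have "g \<in> insert k I \<rightarrow> carrier G"
      using subgroup.mem_carrier[OF H] by fastforce
    with insert H show ?case
      by (simp add: lincomb_insert subgroup.m_closed subgroup_int_pow_closed)
  qed (simp add: lincomb_def subgroup.one_closed[OF H])
qed (simp add: lincomb_def subgroup.one_closed[OF H])

lemma generate_imp_lincomb: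
  assumes S: "S \<subseteq> carrier G" and x: "x \<in> generate G S"
  shows "\<exists>F c. finite F \<and> F \<subseteq> S \<and> x = lincomb G (\<lambda>y. y) c F"
  using x
proof (induction rule: generate.induct)
  case one
  have "\<one> = lincomb G (\<lambda>y. y) (\<lambda>i. 0) {}" by simp
  then show ?case by blast
next
  case (incl h)
  then have "h = lincomb G (\<lambda>y. y) (\<lambda>i. if i = h then 1 else 0) {h}"
    using S lincomb_unit_vector[of "{h}" h "\<lambda>y. y"] by auto
  then show ?case using incl by blast
next
  case (inv h)
  then have "inv h = lincomb G (\<lambda>y. y) (\<lambda>i. - (if i = h then 1 else 0)) {h}"
    using S lincomb_unit_vector[of "{h}" h "\<lambda>y. y"]
      lincomb_uminus[of "\<lambda>y. y" "{h}" "\<lambda>i. if i = h then 1 else 0"] by auto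
  then show ?case using inv by blast
next
  case (eng h1 h2)
  then obtain F1 c1 F2 c2 where F: "finite F1" "F1 \<subseteq> S" "h1 = lincomb G (\<lambda>y. y) c1 F1"
    "finite F2" "F2 \<subseteq> S" "h2 = lincomb G (\<lambda>y. y) c2 F2" by blast
  then have "(\<lambda>y. y) \<in> F1 \<union> F2 \<rightarrow> carrier G" using S by auto
  with F show ?case using lincomb_union[of F1 F2 "\<lambda>y. y" c1 c2] by blast
qed

lemma spans_if_generate:
  assumes "finite S" "S \<subseteq> carrier G" "generate G S = carrier G"
  shows "spans G (\<lambda>y. y) S"
  unfolding spans_def
proof
  fix x assume "x \<in> carrier G"
  then obtain F c where "finite F" "F \<subseteq> S" "x = lincomb G (\<lambda>y. y) c F"
    using generate_imp_lincomb assms by blast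
  then show "\<exists>c. x = lincomb G (\<lambda>y. y) c S"
    using assms lincomb_extend[of S F "\<lambda>y. y" c] by auto
qed

lemma generate_eq_if_spans:
  assumes g: "g \<in> I \<rightarrow> carrier G" and sp: "spans G g I"
  shows "generate G (g ` I) = carrier G"
proof
  show "generate G (g ` I) \<subseteq> carrier G" using g by (intro generate_incl) auto
  show "carrier G \<subseteq> generate G (g ` I)"
  proof
    fix x assume "x \<in> carrier G"
    then obtain c where "x = lincomb G g c I" using sp unfolding spans_def by blast
    also have "\<dots> \<in> generate G (g ` I)"
      using g by (intro lincomb_in_subgroup generate_is_subgroup) (auto intro: generate.incl)
    finally show "x \<in> generate G (g ` I)" .
  qed
qed

end

section \<open>Finitely generated torsion-free abelian groups are free\<close>

lemma (in group) torsion_free_int_pow_eq_one: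
  assumes "torsion_free G" "x \<in> carrier G" "x [^] (n::int) = \<one>" "n \<noteq> 0"
  shows "x = \<one>"
proof -
  have "x [^] \<bar>n\<bar> = \<one>"
  proof (cases "n \<ge> 0")
    case False
    then have "\<bar>n\<bar> = - n" by simp
    then show ?thesis using assms(2,3) int_pow_neg[OF assms(2), of n] by simp
  qed (use assms(3) in simp)
  then have "x [^] nat \<bar>n\<bar> = \<one>"
    using int_pow_int[of G x "nat \<bar>n\<bar>"] by simp
  moreover have "nat \<bar>n\<bar> > 0" using assms(4) by simp
  ultimately show ?thesis
    using assms(1,2) unfolding torsion_free_def by blast
qed

lemma (in group) torsion_free_subgroup:
  assumes "torsion_free G" "subgroup K G"
  shows "torsion_free (G\<lparr>carrier := K\<rparr>)"
  unfolding torsion_free_def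
proof (intro ballI allI impI)
  fix x and n :: nat
  assume "x \<in> carrier (G\<lparr>carrier := K\<rparr>)"
    and "0 < n \<and> x [^]\<^bsub>G\<lparr>carrier := K\<rparr>\<^esub> n = \<one>\<^bsub>G\<lparr>carrier := K\<rparr>\<^esub>"
  then show "x = \<one>\<^bsub>G\<lparr>carrier := K\<rparr>\<^esub>"
    using assms subgroup.mem_carrier[OF assms(2)] nat_pow_consistent[of x n K]
    unfolding torsion_free_def by (simp; blast)
qed

context comm_group
begin

lemma lincomb_shear:
  assumes I: "finite I" "i \<in> I" "j \<in> I" "i \<noteq> j" and g: "g \<in> I \<rightarrow> carrier G"
  shows "lincomb G g d I = lincomb G (g(i := g i \<otimes> g j [^] t)) (d(j := d j - t * d i)) I"
proof -
  let ?g = "g(i := g i \<otimes> g j [^] t)" and ?d = "d(j := d j - t * d i)"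
  have gi: "g i \<in> carrier G" and gj: "g j \<in> carrier G" using g I by auto
  have g': "?g \<in> I \<rightarrow> carrier G" using g gi gj by auto
  have I': "finite (I - {i})" "j \<in> I - {i}" using I by auto
  have gI': "g \<in> I - {i} \<rightarrow> carrier G" "?g \<in> I - {i} \<rightarrow> carrier G" using g g' by auto
  define R where "R = lincomb G g d (I - {i} - {j})"
  have R: "R \<in> carrier G" unfolding R_def using g by (intro lincomb_closed) auto
  have lhs: "lincomb G g d I = g i [^] d i \<otimes> (g j [^] d j \<otimes> R)"
    unfolding R_def using lincomb_remove[OF I(1,2) g] lincomb_remove[OF I' gI'(1)] by simp
  have "lincomb G ?g ?d (I - {i} - {j}) = R"
    unfolding R_def using g by (intro lincomb_cong) auto
  then have "lincomb G ?g ?d I = ?g i [^] ?d i \<otimes> (?g j [^] ?d j \<otimes> R)"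
    using lincomb_remove[OF I(1,2) g'] lincomb_remove[OF I' gI'(2)] by simp
  also have "\<dots> = g i [^] d i \<otimes> g j [^] (t * d i) \<otimes> (g j [^] d j \<otimes> inv (g j [^] (t * d i)) \<otimes> R)"
    using I gi gj by (simp add: int_pow_distrib int_pow_pow int_pow_diff)
  also have "\<dots> = g i [^] d i \<otimes> (g j [^] d j \<otimes> R)"
  proof -
    have "u \<otimes> v \<otimes> (w \<otimes> inv v \<otimes> R) = u \<otimes> (w \<otimes> R)"
      if "u \<in> carrier G" "v \<in> carrier G" "w \<in> carrier G" for u v w
      using that R by (metis inv_closed m_assoc m_closed m_lcomm r_inv r_one)
    then show ?thesis using gi gj by simp
  qed
  finally show ?thesis using lhs by simp
qed

lemma spans_shear:
  fixes t :: int
  assumes "finite I" "i \<in> I" "j \<in> I" "i \<noteq> j" "g \<in> I \<rightarrow> carrier G" "spans G g I"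
  shows "spans G (g(i := g i \<otimes> g j [^] t)) I"
  unfolding spans_def
proof
  fix x assume "x \<in> carrier G"
  then obtain d where "x = lincomb G g d I" using assms(6) unfolding spans_def by blast
  then show "\<exists>d. x = lincomb G (g(i := g i \<otimes> g j [^] t)) d I"
    using lincomb_shear[OF assms(1-5), of d t] by blast
qed

lemma spans_remove_one:
  assumes I: "finite I" "k \<in> I" and g: "g \<in> I \<rightarrow> carrier G" "g k = \<one>" and sp: "spans G g I"
  shows "spans G g (I - {k})"
  unfolding spans_def
proof
  fix x assume "x \<in> carrier G"
  then obtain c where "x = lincomb G g c I" using sp unfolding spans_def by blast
  also have "\<dots> = lincomb G g c (I - {k})"
  proof -
    have "g \<in> I - {k} \<rightarrow> carrier G" using g by auto
    then show ?thesis using lincomb_remove[OF I g(1)] g by simp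
  qed
  finally show "\<exists>c. x = lincomb G g c (I - {k})" by blast
qed

lemma abs_sub_sgn_less:
  fixes a b :: int
  assumes "a \<noteq> 0" "\<bar>a\<bar> \<le> \<bar>b\<bar>"
  shows "\<bar>b - sgn a * sgn b * a\<bar> < \<bar>b\<bar>"
  using assms by (cases "a > 0"; cases "b > 0") (auto simp: sgn_if)

lemma relation_euclid_step:
  assumes I: "finite I" and ij: "i \<in> I" "j \<in> I" "i \<noteq> j"
    and g: "g \<in> I \<rightarrow> carrier G" and sp: "spans G g I" and rel: "lincomb G g c I = \<one>"
    and c: "c i \<noteq> 0" "\<bar>c i\<bar> \<le> \<bar>c j\<bar>"
  shows "\<exists>g' c'. g' \<in> I \<rightarrow> carrier G \<and> spans G g' I \<and> lincomb G g' c' I = \<one> \<and> c' i \<noteq> 0 \<and>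
    (\<Sum>x\<in>I. nat \<bar>c' x\<bar>) < (\<Sum>x\<in>I. nat \<bar>c x\<bar>)"
proof -
  define t where "t = sgn (c i) * sgn (c j)"
  define g' where "g' = g(i := g i \<otimes> g j [^] t)"
  define c' where "c' = c(j := c j - t * c i)"
  have "g' \<in> I \<rightarrow> carrier G" using g ij unfolding g'_def by (force simp: Pi_iff)
  moreover have "spans G g' I"
    unfolding g'_def by (rule spans_shear[OF I ij g sp])
  moreover have "lincomb G g' c' I = \<one>"
    using rel lincomb_shear[OF I ij g, of c t] unfolding g'_def c'_def by simp
  moreover have "c' i \<noteq> 0" using ij c unfolding c'_def by simp
  moreover have "(\<Sum>x\<in>I. nat \<bar>c' x\<bar>) < (\<Sum>x\<in>I. nat \<bar>c x\<bar>)"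
  proof (rule sum_strict_mono_ex1[OF I])
    have "\<bar>c' j\<bar> < \<bar>c j\<bar>"
      unfolding c'_def t_def using abs_sub_sgn_less[OF c] by (simp add: mult.assoc)
    then show "\<exists>x\<in>I. nat \<bar>c' x\<bar> < nat \<bar>c x\<bar>" using ij(2) by force
    show "\<forall>x\<in>I. nat \<bar>c' x\<bar> \<le> nat \<bar>c x\<bar>"
      using \<open>\<bar>c' j\<bar> < \<bar>c j\<bar>\<close> unfolding c'_def by auto
  qed
  ultimately show ?thesis by blast
qed

text \<open>Euclid's algorithm on the coefficients of a relation, realised by shears of the family,
  shrinks the relation until it has a single nonzero coefficient; that member is then trivial
  by torsion-freeness and can be dropped.\<close>

lemma spans_remove_if_relation:
  assumes tf: "torsion_free G" and I: "finite I"
  shows "\<lbrakk>g \<in> I \<rightarrow> carrier G; spans G g I; lincomb G g c I = \<one>; k \<in> I; c k \<noteq> 0\<rbrakk>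
     \<Longrightarrow> \<exists>k' \<in> I. \<exists>g'. g' \<in> I \<rightarrow> carrier G \<and> spans G g' (I - {k'})"
proof (induction "\<Sum>i\<in>I. nat \<bar>c i\<bar>" arbitrary: g c k rule: less_induct)
  case less
  note g = less.prems(1) and sp = less.prems(2) and rel = less.prems(3) and k = less.prems(4,5)
  show ?case
  proof (cases "\<exists>j \<in> I - {k}. c j \<noteq> 0")
    case False
    have gk: "g k \<in> carrier G" using g k by auto
    have "lincomb G g c (I - {k}) = lincomb G g (\<lambda>i. 0) (I - {k})"
      using False g by (intro lincomb_cong) auto
    then have "g k [^] c k = \<one>"
      using rel lincomb_remove[OF I k(1) g] gk by simp
    then have "g k = \<one>"
      using group.torsion_free_int_pow_eq_one[OF is_group tf gk] k by blast
    then show ?thesis using spans_remove_one[OF I k(1) g _ sp] g k by blast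
  next
    case True
    then obtain j where j: "j \<in> I" "j \<noteq> k" "c j \<noteq> 0" by blast
    have shrink: ?thesis
      if ij: "i \<in> I" "j \<in> I" "i \<noteq> j" "c i \<noteq> 0" "\<bar>c i\<bar> \<le> \<bar>c j\<bar>" for i j
    proof -
      obtain g' c' where new: "g' \<in> I \<rightarrow> carrier G" "spans G g' I" "lincomb G g' c' I = \<one>"
        "c' i \<noteq> 0" "(\<Sum>x\<in>I. nat \<bar>c' x\<bar>) < (\<Sum>x\<in>I. nat \<bar>c x\<bar>)"
        using relation_euclid_step[OF I ij(1-3) g sp rel ij(4,5)] by blast
      from less.hyps[OF new(5,1-3) ij(1) new(4)] show ?thesis .
    qed
    show ?thesis
    proof (cases "\<bar>c k\<bar> \<le> \<bar>c j\<bar>")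
      case True then show ?thesis using shrink[of k j] j k by auto
    next
      case False then show ?thesis using shrink[of j k] j k by auto
    qed
  qed
qed

lemma exists_basis_subfamily:
  assumes tf: "torsion_free G"
  shows "\<lbrakk>finite I; g \<in> I \<rightarrow> carrier G; spans G g I\<rbrakk>
     \<Longrightarrow> \<exists>J h. J \<subseteq> I \<and> h \<in> J \<rightarrow> carrier G \<and> spans G h J \<and> lin_indep G h J"
proof (induction "card I" arbitrary: I g rule: less_induct)
  case (less I g)
  show ?case
  proof (cases "lin_indep G g I")
    case False
    then obtain c k where "lincomb G g c I = \<one>" "k \<in> I" "c k \<noteq> 0"
      unfolding lin_indep_def by blast
    then obtain k' g' where k': "k' \<in> I" "g' \<in> I \<rightarrow> carrier G" "spans G g' (I - {k'})"
      using spans_remove_if_relation[OF tf less.prems(1,2,3)] by blast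
    have "card (I - {k'}) < card I" using less.prems(1) k'(1) by (rule card_Diff1_less)
    moreover have "finite (I - {k'})" using less.prems(1) by simp
    moreover have "g' \<in> I - {k'} \<rightarrow> carrier G" using k'(2) by auto
    ultimately obtain J h where "J \<subseteq> I - {k'}" "h \<in> J \<rightarrow> carrier G" "spans G h J" "lin_indep G h J"
      using less.hyps k'(3) by meson
    then show ?thesis by blast
  next
    case True
    with less.prems(2,3) show ?thesis by blast
  qed
qed

end

lemma (in comm_group) subgroup_is_comm_group:
  assumes "subgroup N G"
  shows "comm_group (G\<lparr>carrier := N\<rparr>)"
  using subgroup.subgroup_is_group[OF assms is_group]
  by (rule group.group_comm_groupI) (auto simp: m_comm subgroup.mem_carrier[OF assms])

lemma (in comm_group) lincomb_subgroup:
  assumes N: "subgroup N G" and h: "h \<in> J \<rightarrow> N"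
  shows "lincomb (G\<lparr>carrier := N\<rparr>) h d J = lincomb G h d J"
proof -
  interpret N: comm_group "G\<lparr>carrier := N\<rparr>" by (rule subgroup_is_comm_group[OF N])
  show ?thesis
  proof (cases "finite J")
    case True
    from True h show ?thesis
    proof (induction J rule: finite_induct)
      case (insert k J)
      have "h \<in> insert k J \<rightarrow> carrier G" using insert.prems subgroup.mem_carrier[OF N] by fastforce
      with insert N.lincomb_insert[of J k h d] int_pow_consistent[OF N, of "h k" "d k"]
      show ?case by (simp add: lincomb_insert)
    qed (simp add: lincomb_def)
  qed (simp add: lincomb_def)
qed

lemma (in comm_group) abelian_basis_image:
  assumes J: "finite J" and h: "h \<in> J \<rightarrow> carrier G" and sp: "spans G h J"
    and ind: "lin_indep G h J"
  shows "abelian_basis G (h ` J)"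
proof -
  have inj: "inj_on h J"
  proof (rule inj_onI, rule ccontr)
    fix a b assume ab: "a \<in> J" "b \<in> J" "h a = h b" "a \<noteq> b"
    then have "lincomb G h (\<lambda>i. if i = a then 1 else 0) J = lincomb G h (\<lambda>i. if i = b then 1 else 0) J"
      using lincomb_unit_vector[OF J _ h] by simp
    then have "lincomb G h (\<lambda>i. (if i = a then 1 else 0) - (if i = b then 1 else 0)) J = \<one>"
      by (rule lincomb_diff_eq_one[OF h])
    then show False using ind ab unfolding lin_indep_def by force
  qed
  have "\<forall>b \<in> F. c b = 0"
    if F: "finite F" "F \<subseteq> h ` J" and rel: "finprod G (\<lambda>b. b [^] c b) F = \<one>" for F and c :: "'a \<Rightarrow> int"
  proof -
    define c' where "c' = (\<lambda>j. if h j \<in> F then c (h j) else 0)"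
    have "lincomb G h c' J = finprod G (\<lambda>b. b [^] (if b \<in> F then c b else 0)) (h ` J)"
      unfolding lincomb_def c'_def using h inj by (subst finprod_reindex) (auto simp: Pi_iff)
    also have "\<dots> = finprod G (\<lambda>b. b [^] c b) F"
      using F J h by (intro finprod_mono_neutral_cong_left[symmetric]) auto
    finally have "\<forall>j \<in> J. c' j = 0" using rel ind unfolding lin_indep_def by simp
    then show ?thesis using F unfolding c'_def by fastforce
  qed
  then show ?thesis
    unfolding abelian_basis_def using generate_eq_if_spans[OF h sp] h by auto
qed

lemma group_homI: "\<lbrakk>group G; group H; h \<in> hom G H\<rbrakk> \<Longrightarrow> group_hom G H h"
  by (simp add: group_hom_def group_hom_axioms_def)

lemma fin_gen_group_image:
  assumes h: "group G" "group H" "h \<in> hom G H" "h ` carrier G = carrier H"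
    and G: "fin_gen_group G"
  shows "fin_gen_group H"
proof -
  obtain S where S: "finite S" "S \<subseteq> carrier G" "generate G S = carrier G"
    using G unfolding fin_gen_group_def by blast
  then have "generate H (h ` S) = carrier H"
    using group_hom.generate_img[OF group_homI[OF h(1-3)] S(2)] h(4) by simp
  moreover have "h ` S \<subseteq> carrier H" using S(2) h(4) by blast
  ultimately show ?thesis using S(1) unfolding fin_gen_group_def by blast
qed

lemma (in comm_group) exists_abelian_basis:
  assumes "torsion_free G" "fin_gen_group G"
  shows "\<exists>B. abelian_basis G B"
proof -
  obtain S where S: "finite S" "S \<subseteq> carrier G" "generate G S = carrier G"
    using assms(2) unfolding fin_gen_group_def by blast
  have "(\<lambda>y. y) \<in> S \<rightarrow> carrier G" using S(2) by auto
  then obtain J h where "J \<subseteq> S" "h \<in> J \<rightarrow> carrier G" "spans G h J" "lin_indep G h J"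
    using exists_basis_subfamily[OF assms(1) S(1) _ spans_if_generate[OF S]] by blast
  moreover from \<open>J \<subseteq> S\<close> have "finite J" using S(1) by (rule finite_subset)
  ultimately have "abelian_basis G (h ` J)" by (intro abelian_basis_image)
  then show ?thesis ..
qed

section \<open>Basis elements and homomorphisms to the integers\<close>

lemma (in group) int_hom_mult:
  "\<lbrakk>\<psi> \<in> hom G integer_group; x \<in> carrier G; y \<in> carrier G\<rbrakk> \<Longrightarrow> \<psi> (x \<otimes> y) = \<psi> x + \<psi> y"
  using hom_mult[of \<psi> G integer_group x y] by simp

lemma (in group) int_hom_int_pow:
  "\<lbrakk>\<psi> \<in> hom G integer_group; x \<in> carrier G\<rbrakk> \<Longrightarrow> \<psi> (x [^] (n::int)) = n * \<psi> x"
  using hom_int_pow[of \<psi> G integer_group x n] by simp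

lemma (in group) int_hom_one: "\<psi> \<in> hom G integer_group \<Longrightarrow> \<psi> \<one> = 0"
  using int_hom_int_pow[of \<psi> \<one> 0] by simp

lemma (in group) int_hom_inv:
  "\<lbrakk>\<psi> \<in> hom G integer_group; x \<in> carrier G\<rbrakk> \<Longrightarrow> \<psi> (inv x) = - \<psi> x"
  using int_hom_int_pow[of \<psi> x "-1"] by (simp add: int_pow_neg)

definition extends_to_basis :: "('a, 'b) monoid_scheme \<Rightarrow> 'a \<Rightarrow> bool" where
  "extends_to_basis G x \<longleftrightarrow> (\<exists>B. abelian_basis G B \<and> x \<in> B)"

lemma (in comm_group) abelian_basis_coeff_unique:
  assumes B: "abelian_basis G B" and F: "finite F" "F \<subseteq> B" "finite F'" "F' \<subseteq> B"
    and b: "b \<in> F" "b \<in> F'" and eq: "lincomb G (\<lambda>y. y) c F = lincomb G (\<lambda>y. y) c' F'"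
  shows "c b = c' b"
proof -
  let ?E = "F \<union> F'"
  have E: "finite ?E" "?E \<subseteq> B" "(\<lambda>y. y) \<in> ?E \<rightarrow> carrier G"
    using F B unfolding abelian_basis_def by auto
  have "lincomb G (\<lambda>y. y) c F = lincomb G (\<lambda>y. y) (\<lambda>i. if i \<in> F then c i else 0) ?E"
    "lincomb G (\<lambda>y. y) c' F' = lincomb G (\<lambda>y. y) (\<lambda>i. if i \<in> F' then c' i else 0) ?E"
    by (rule lincomb_extend[OF E(1) _ E(3)], blast)+
  with eq have "lincomb G (\<lambda>y. y) (\<lambda>i. if i \<in> F then c i else 0) ?E =
      lincomb G (\<lambda>y. y) (\<lambda>i. if i \<in> F' then c' i else 0) ?E"
    by (simp only:)
  then have "lincomb G (\<lambda>y. y) (\<lambda>i. (if i \<in> F then c i else 0) - (if i \<in> F' then c' i else 0)) ?E = \<one>"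
    by (rule lincomb_diff_eq_one[OF E(3)])
  moreover have "\<And>F c. \<lbrakk>finite F; F \<subseteq> B; lincomb G (\<lambda>y. y) c F = \<one>\<rbrakk> \<Longrightarrow> \<forall>b \<in> F. c b = 0"
    using B unfolding abelian_basis_def lincomb_def by auto
  ultimately have "\<forall>i \<in> ?E. (if i \<in> F then c i else 0) - (if i \<in> F' then c' i else 0) = 0"
    using E(1,2) by blast
  then have "(if b \<in> F then c b else 0) - (if b \<in> F' then c' b else 0) = 0" using b by blast
  with b show ?thesis by simp
qed

lemma (in comm_group) int_hom_eq_1_if_extends_to_basis:
  assumes "extends_to_basis G b"
  shows "\<exists>\<phi> \<in> hom G integer_group. \<phi> b = 1"
proof -
  obtain B where B: "abelian_basis G B" "b \<in> B"
    using assms unfolding extends_to_basis_def by blast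
  have BG: "B \<subseteq> carrier G" and gen: "generate G B = carrier G"
    using B(1) unfolding abelian_basis_def by auto
  define rep where
    "rep x F c \<longleftrightarrow> finite F \<and> F \<subseteq> B \<and> b \<in> F \<and> x = lincomb G (\<lambda>y. y) c F" for x F c
  have rep_exists: "\<exists>F c. rep x F c" if "x \<in> carrier G" for x
  proof -
    from that gen have "x \<in> generate G B" by simp
    then obtain F c where F: "finite F" "F \<subseteq> B" "x = lincomb G (\<lambda>y. y) c F"
      using generate_imp_lincomb[OF BG] by blast
    have "finite (insert b F)" "F \<subseteq> insert b F" "(\<lambda>y. y) \<in> insert b F \<rightarrow> carrier G"
      using F BG B(2) by auto
    from lincomb_extend[OF this, of c] F(3)
    have "x = lincomb G (\<lambda>y. y) (\<lambda>i. if i \<in> F then c i else 0) (insert b F)" by simp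
    then show ?thesis unfolding rep_def using F B(2) by blast
  qed
  define \<phi> where "\<phi> x = (THE n. \<exists>F c. rep x F c \<and> c b = n)" for x
  have \<phi>: "\<phi> x = c b" if r: "rep x F c" for x F c
    unfolding \<phi>_def
  proof (rule the_equality)
    show "\<exists>F c'. rep x F c' \<and> c' b = c b" using r by blast
    fix n assume "\<exists>F' c'. rep x F' c' \<and> c' b = n"
    then obtain F' c' where r': "rep x F' c'" "c' b = n" by blast
    then show "n = c b"
      using abelian_basis_coeff_unique[OF B(1), of F' F b c' c] r unfolding rep_def by auto
  qed
  have "\<phi> \<in> hom G integer_group"
  proof (rule homI)
    fix x y assume "x \<in> carrier G" "y \<in> carrier G"
    then obtain F c F' c' where r: "rep x F c" "rep y F' c'" using rep_exists by meson
    then have "(\<lambda>y. y) \<in> F \<union> F' \<rightarrow> carrier G" using BG unfolding rep_def by auto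
    then have "rep (x \<otimes> y) (F \<union> F')
        (\<lambda>i. (if i \<in> F then c i else 0) + (if i \<in> F' then c' i else 0))"
      using r lincomb_union[of F F' "\<lambda>y. y" c c'] unfolding rep_def by auto
    then show "\<phi> (x \<otimes> y) = \<phi> x \<otimes>\<^bsub>integer_group\<^esub> \<phi> y"
      using \<phi> r unfolding rep_def by auto
  qed simp
  moreover have "rep b {b} (\<lambda>i. 1)"
    unfolding rep_def using B BG lincomb_unit_vector[of "{b}" b "\<lambda>y. y"] by (auto simp: lincomb_def)
  ultimately show ?thesis using \<phi>[of b "{b}" "\<lambda>i. 1"] by auto
qed

lemma (in comm_group) generate_insert_kernel:
  assumes \<psi>: "\<psi> \<in> hom G integer_group" and q: "q \<in> carrier G" "\<psi> q = 1"
    and B: "generate G B = kernel G integer_group \<psi>"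
  shows "generate G (insert q B) = carrier G"
proof
  have "B \<subseteq> carrier G"
    using generate.incl[of _ B G] B unfolding kernel_def by blast
  then have qB: "insert q B \<subseteq> carrier G" using q by blast
  then show "generate G (insert q B) \<subseteq> carrier G" by (rule generate_incl)
  show "carrier G \<subseteq> generate G (insert q B)"
  proof
    fix x assume x: "x \<in> carrier G"
    have "x \<otimes> inv (q [^] \<psi> x) \<in> kernel G integer_group \<psi>"
      using x q \<psi> by (simp add: kernel_def int_hom_mult int_hom_inv int_hom_int_pow)
    then have "x \<otimes> inv (q [^] \<psi> x) \<in> generate G (insert q B)"
      using B mono_generate[of B "insert q B"] by blast
    moreover have "q [^] \<psi> x \<in> generate G (insert q B)"
      using qB by (intro subgroup_int_pow_closed generate_is_subgroup) (auto intro: generate.incl)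
    ultimately have "q [^] \<psi> x \<otimes> (x \<otimes> inv (q [^] \<psi> x)) \<in> generate G (insert q B)"
      by (simp add: subgroup.m_closed[OF generate_is_subgroup[OF qB]])
    then show "x \<in> generate G (insert q B)"
      using x q by (simp add: m_lcomm)
  qed
qed

text \<open>A relation among insert q B has coefficient 0 at q, as seen by applying \<psi>.\<close>

lemma (in comm_group) abelian_basis_insert_kernel:
  assumes \<psi>: "\<psi> \<in> hom G integer_group" and q: "q \<in> carrier G" "\<psi> q = 1"
    and B: "abelian_basis (G\<lparr>carrier := kernel G integer_group \<psi>\<rparr>) B"
  shows "abelian_basis G (insert q B)"
proof -
  define N where "N = kernel G integer_group \<psi>"
  have N: "subgroup N G"
    unfolding N_def by (rule group_hom.subgroup_kernel[OF group_homI[OF is_group group_integer_group \<psi>]])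
  have BN: "B \<subseteq> N" and genB: "generate G B = N"
    using B generate_consistent[OF _ N] unfolding abelian_basis_def N_def by auto
  have indB: "\<forall>b \<in> F. c b = 0"
    if F: "finite F" "F \<subseteq> B" and rel: "lincomb G (\<lambda>b. b) c F = \<one>" for F c
  proof -
    have "lincomb (G\<lparr>carrier := N\<rparr>) (\<lambda>b. b) c F = \<one>\<^bsub>G\<lparr>carrier := N\<rparr>\<^esub>"
      using lincomb_subgroup[OF N, of "\<lambda>b. b" F c] F(2) BN rel by auto
    with B F show ?thesis unfolding abelian_basis_def N_def lincomb_def by blast
  qed
  have qB: "insert q B \<subseteq> carrier G" using BN q subgroup.subset[OF N] by blast
  have "\<forall>b \<in> F. c b = 0"
    if F: "finite F" "F \<subseteq> insert q B" and rel: "lincomb G (\<lambda>b. b) c F = \<one>" for F c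
  proof -
    let ?P = "lincomb G (\<lambda>b. b) c (F - {q})"
    have P: "?P \<in> N" using F BN by (intro lincomb_in_subgroup[OF N]) auto
    then have P0: "\<psi> ?P = 0" unfolding N_def kernel_def by simp
    have split: "lincomb G (\<lambda>b. b) c F = q [^] c q \<otimes> ?P" if "q \<in> F"
      using lincomb_remove[OF F(1) that, of "\<lambda>b. b"] F qB by auto
    have cq: "c q = 0" if "q \<in> F"
      using arg_cong[OF split[OF that], of \<psi>] rel P P0 q \<psi> subgroup.mem_carrier[OF N]
      by (simp add: int_hom_mult int_hom_int_pow int_hom_one)
    have "?P = \<one>"
    proof (cases "q \<in> F")
      case True
      then show ?thesis using split cq rel P subgroup.mem_carrier[OF N] by simp
    next
      case False
      then show ?thesis using rel by simp
    qed
    then have "\<forall>b \<in> F - {q}. c b = 0" using F by (intro indB) auto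
    then show ?thesis using cq by blast
  qed
  then show ?thesis
    using generate_insert_kernel[OF \<psi> q genB[unfolded N_def]] qB
    unfolding abelian_basis_def lincomb_def by auto
qed

text \<open>The kernel of \<psi> is a retract of G via x \<mapsto> x \<otimes> inv (q [^] \<psi> x), hence finitely generated.\<close>

lemma (in comm_group) fin_gen_kernel_int_hom:
  assumes fg: "fin_gen_group G" and \<psi>: "\<psi> \<in> hom G integer_group" and q: "q \<in> carrier G" "\<psi> q = 1"
  shows "fin_gen_group (G\<lparr>carrier := kernel G integer_group \<psi>\<rparr>)"
proof -
  define N where "N = kernel G integer_group \<psi>"
  have N: "subgroup N G"
    unfolding N_def by (rule group_hom.subgroup_kernel[OF group_homI[OF is_group group_integer_group \<psi>]])
  interpret NG: comm_group "G\<lparr>carrier := N\<rparr>" by (rule subgroup_is_comm_group[OF N])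
  define r where "r x = x \<otimes> inv (q [^] \<psi> x)" for x
  have r_N: "r x \<in> N" if "x \<in> carrier G" for x
    using that q \<psi> unfolding r_def N_def kernel_def
    by (simp add: int_hom_mult int_hom_inv int_hom_int_pow)
  have r_id: "r y = y" if "y \<in> N" for y
    using that q unfolding r_def N_def kernel_def by simp
  have "r \<in> hom G (G\<lparr>carrier := N\<rparr>)"
  proof (rule homI)
    fix x y assume xy: "x \<in> carrier G" "y \<in> carrier G"
    have "r (x \<otimes> y) = x \<otimes> y \<otimes> inv (q [^] \<psi> x \<otimes> q [^] \<psi> y)"
      unfolding r_def using xy q \<psi> by (simp add: int_hom_mult int_pow_mult)
    also have "\<dots> = r x \<otimes> r y"
      unfolding r_def using xy q by (simp add: inv_mult m_assoc m_lcomm[of y])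
    finally show "r (x \<otimes> y) = r x \<otimes>\<^bsub>G\<lparr>carrier := N\<rparr>\<^esub> r y" by simp
  qed (simp add: r_N)
  moreover have "r ` carrier G = N"
  proof
    show "N \<subseteq> r ` carrier G"
      using r_id subgroup.mem_carrier[OF N] by (metis image_eqI subsetI)
  qed (use r_N in blast)
  ultimately show ?thesis
    using fin_gen_group_image[OF is_group NG.is_group _ _ fg] unfolding N_def by simp
qed

lemma (in comm_group) extends_to_basis_if_int_hom_eq_1:
  assumes tf: "torsion_free G" and fg: "fin_gen_group G"
    and \<psi>: "\<psi> \<in> hom G integer_group" and q: "q \<in> carrier G" "\<psi> q = 1"
  shows "extends_to_basis G q"
proof -
  have N: "subgroup (kernel G integer_group \<psi>) G"
    by (rule group_hom.subgroup_kernel[OF group_homI[OF is_group group_integer_group \<psi>]])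
  interpret N: comm_group "G\<lparr>carrier := kernel G integer_group \<psi>\<rparr>"
    by (rule subgroup_is_comm_group[OF N])
  obtain B where "abelian_basis (G\<lparr>carrier := kernel G integer_group \<psi>\<rparr>) B"
    using N.exists_abelian_basis[OF torsion_free_subgroup[OF tf N] fin_gen_kernel_int_hom[OF fg \<psi> q]]
    by blast
  then have "abelian_basis G (insert q B)" by (rule abelian_basis_insert_kernel[OF \<psi> q])
  then show ?thesis unfolding extends_to_basis_def by blast
qed

lemma (in comm_group) extends_to_basis_iff_int_hom_eq_1:
  assumes "torsion_free G" "fin_gen_group G" "x \<in> carrier G"
  shows "extends_to_basis G x \<longleftrightarrow> (\<exists>\<phi> \<in> hom G integer_group. \<phi> x = 1)"
  using extends_to_basis_if_int_hom_eq_1[OF assms(1,2) _ assms(3)]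
    int_hom_eq_1_if_extends_to_basis by meson

lemma (in comm_group) exists_int_hom_eq_1:
  assumes "torsion_free G" "fin_gen_group G" "carrier G \<noteq> {\<one>}"
  shows "\<exists>x \<in> carrier G. \<exists>\<phi> \<in> hom G integer_group. \<phi> x = 1"
proof -
  obtain B where B: "abelian_basis G B" using exists_abelian_basis assms(1,2) by blast
  have "B \<noteq> {}"
    using B assms(3) generate_empty unfolding abelian_basis_def by auto
  then obtain b where b: "b \<in> B" by blast
  then have "extends_to_basis G b" using B unfolding extends_to_basis_def by blast
  moreover have "b \<in> carrier G" using B b unfolding abelian_basis_def by blast
  ultimately show ?thesis using int_hom_eq_1_if_extends_to_basis by blast
qed

section \<open>Abelian direct factors and central elements\<close>

lemma (in group) subgroup_center: "subgroup (center G) G"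
proof (rule subgroupI)
  fix a b assume a: "a \<in> center G" and b: "b \<in> center G"
  then have ac: "a \<in> carrier G" "\<And>g. g \<in> carrier G \<Longrightarrow> a \<otimes> g = g \<otimes> a"
    and bc: "b \<in> carrier G" "\<And>g. g \<in> carrier G \<Longrightarrow> b \<otimes> g = g \<otimes> b"
    unfolding center_def by auto
  have "inv a \<otimes> g = g \<otimes> inv a" if g: "g \<in> carrier G" for g
  proof -
    have "inv a \<otimes> g = inv a \<otimes> (g \<otimes> a) \<otimes> inv a" using g ac(1) by (simp add: m_assoc)
    also have "\<dots> = inv a \<otimes> (a \<otimes> g) \<otimes> inv a" using ac(2)[OF g] by simp
    also have "\<dots> = g \<otimes> inv a" using g ac(1) by (simp add: m_assoc[symmetric])
    finally show ?thesis .
  qed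
  then show "inv a \<in> center G" using ac(1) unfolding center_def by auto
  have "a \<otimes> b \<otimes> g = g \<otimes> (a \<otimes> b)" if g: "g \<in> carrier G" for g
  proof -
    have "a \<otimes> b \<otimes> g = a \<otimes> (g \<otimes> b)" using g ac(1) bc(1) bc(2)[OF g] by (simp add: m_assoc)
    also have "\<dots> = g \<otimes> (a \<otimes> b)" using g ac(1) bc(1) ac(2)[OF g] by (simp add: m_assoc[symmetric])
    finally show ?thesis .
  qed
  then show "a \<otimes> b \<in> center G" using ac(1) bc(1) unfolding center_def by auto
qed (auto simp: center_def)

lemma (in group) normal_if_subset_center:
  assumes K: "subgroup K G" and KZ: "K \<subseteq> center G"
  shows "K \<lhd> G"
proof (rule normal_invI[OF K])
  fix x k assume x: "x \<in> carrier G" and k: "k \<in> K"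
  then have "x \<otimes> k = k \<otimes> x" using KZ unfolding center_def by auto
  then have "x \<otimes> k \<otimes> inv x = k"
    using x k subgroup.mem_carrier[OF K] by (simp add: m_assoc)
  with k show "x \<otimes> k \<otimes> inv x \<in> K" by simp
qed

lemma (in group) comm_group_if_subset_center:
  assumes K: "subgroup K G" and KZ: "K \<subseteq> center G"
  shows "comm_group (G\<lparr>carrier := K\<rparr>)"
  using subgroup.subgroup_is_group[OF K is_group]
proof (rule group.group_comm_groupI)
  fix x y assume "x \<in> carrier (G\<lparr>carrier := K\<rparr>)" "y \<in> carrier (G\<lparr>carrier := K\<rparr>)"
  then show "x \<otimes>\<^bsub>G\<lparr>carrier := K\<rparr>\<^esub> y = y \<otimes>\<^bsub>G\<lparr>carrier := K\<rparr>\<^esub> x"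
    using KZ subgroup.mem_carrier[OF K] unfolding center_def by auto
qed

lemma (in group) direct_factor_if_central_int_hom:
  assumes \<psi>: "\<psi> \<in> hom G integer_group" and z: "z \<in> center G" "\<psi> z = 1"
  shows "has_nontrivial_abelian_direct_factor G"
proof -
  have zG: "z \<in> carrier G" using z unfolding center_def by auto
  define H where "H = kernel G integer_group \<psi>"
  define K where "K = generate G {z}"
  have H: "H \<lhd> G"
    unfolding H_def by (rule group_hom.normal_kernel[OF group_homI[OF is_group group_integer_group \<psi>]])
  have K_pow: "K = {z [^] (k :: int) | k. k \<in> UNIV}" unfolding K_def by (rule generate_pow[OF zG])
  have KZ: "K \<subseteq> center G" unfolding K_pow using subgroup_int_pow_closed[OF subgroup_center z(1)] by auto
  have subK: "subgroup K G" unfolding K_def using zG by (intro generate_is_subgroup) auto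
  have K: "K \<lhd> G" by (rule normal_if_subset_center[OF subK KZ])
  have "H \<inter> K \<subseteq> {\<one>}"
  proof
    fix x assume "x \<in> H \<inter> K"
    then obtain k :: int where "x = z [^] k" "\<psi> x = 0" unfolding K_pow H_def kernel_def by auto
    then show "x \<in> {\<one>}" using int_hom_int_pow[OF \<psi> zG, of k] z by simp
  qed
  then have HK: "H \<inter> K = {\<one>}"
    using normal_imp_subgroup[OF H] subK by (auto intro: subgroup.one_closed)
  have "carrier G \<subseteq> H <#> K"
  proof
    fix g assume g: "g \<in> carrier G"
    have "g \<otimes> inv (z [^] \<psi> g) \<in> H"
      unfolding H_def kernel_def using g zG z \<psi> by (simp add: int_hom_mult int_hom_inv int_hom_int_pow)
    moreover have "z [^] \<psi> g \<in> K" unfolding K_pow by blast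
    moreover have "g = g \<otimes> inv (z [^] \<psi> g) \<otimes> z [^] \<psi> g" using g zG by (simp add: m_assoc)
    ultimately show "g \<in> H <#> K" unfolding set_mult_def by blast
  qed
  then have prod: "H <#> K = carrier G"
    using set_mult_closed[OF subgroup.subset[OF normal_imp_subgroup[OF H]] subgroup.subset[OF subK]]
    by blast
  have "z \<in> K" unfolding K_def by (rule generate.incl) simp
  then have nontriv: "K \<noteq> {\<one>}" using z int_hom_one[OF \<psi>] by auto
  then show ?thesis
    unfolding has_nontrivial_abelian_direct_factor_def
    using H K HK prod nontriv comm_group_if_subset_center[OF subK KZ] by blast
qed

lemma (in group) normal_subgroups_commute:
  assumes H: "H \<lhd> G" and K: "K \<lhd> G" and HK: "H \<inter> K = {\<one>}" and hk: "h \<in> H" "k \<in> K"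
  shows "h \<otimes> k = k \<otimes> h"
proof -
  interpret H: normal H G by (rule H)
  interpret K: normal K G by (rule K)
  have hG: "h \<in> carrier G" and kG: "k \<in> carrier G" using hk by auto
  define c where "c = h \<otimes> k \<otimes> inv h \<otimes> inv k"
  have "c \<in> K" unfolding c_def using K.inv_op_closed2[OF hG hk(2)] hk(2) by auto
  moreover have "c = h \<otimes> (k \<otimes> inv h \<otimes> inv k)" unfolding c_def using hG kG by (simp add: m_assoc)
  then have "c \<in> H" using H.inv_op_closed2[OF kG H.m_inv_closed[OF hk(1)]] hk(1) by auto
  ultimately have "c = \<one>" using HK by blast
  moreover have "h \<otimes> k = c \<otimes> k \<otimes> h" unfolding c_def using hG kG by (simp add: m_assoc)
  ultimately show ?thesis using hG kG by simp
qed

lemma (in group) direct_factor_projection: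
  assumes H: "H \<lhd> G" and K: "K \<lhd> G" and HK: "H \<inter> K = {\<one>}" "H <#> K = carrier G"
  shows "\<exists>p \<in> hom G (G\<lparr>carrier := K\<rparr>). \<forall>k \<in> K. p k = k"
proof -
  interpret H: normal H G by (rule H)
  interpret K: normal K G by (rule K)
  have decomp: "\<exists>h \<in> H. \<exists>k \<in> K. g = h \<otimes> k" if "g \<in> carrier G" for g
    using that HK(2) unfolding set_mult_def by blast
  have unique: "k = k'" if "h \<in> H" "k \<in> K" "h' \<in> H" "k' \<in> K" "h \<otimes> k = h' \<otimes> k'" for h k h' k'
  proof -
    have G: "h \<in> carrier G" "k \<in> carrier G" "h' \<in> carrier G" "k' \<in> carrier G" using that by auto
    have "inv h' \<otimes> h = k' \<otimes> inv k"
      using G that(5) by (metis inv_solve_left' inv_solve_right m_assoc m_closed inv_closed)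
    moreover have "inv h' \<otimes> h \<in> H" "k' \<otimes> inv k \<in> K" using that by auto
    ultimately have "k' \<otimes> inv k = \<one>" using HK(1) by auto
    then show ?thesis using inv_equality[of k' "inv k"] G by simp
  qed
  define p where "p g = (THE k. k \<in> K \<and> (\<exists>h \<in> H. g = h \<otimes> k))" for g
  have p: "p (h \<otimes> k) = k" if "h \<in> H" "k \<in> K" for h k
    unfolding p_def using that unique by (intro the_equality) blast+
  have "p \<in> hom G (G\<lparr>carrier := K\<rparr>)"
  proof (rule homI)
    fix g assume "g \<in> carrier G"
    then obtain h k where "h \<in> H" "k \<in> K" "g = h \<otimes> k" using decomp by blast
    then show "p g \<in> carrier (G\<lparr>carrier := K\<rparr>)" using p by simp
  next
    fix g1 g2 assume "g1 \<in> carrier G" "g2 \<in> carrier G"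
    then obtain h1 k1 h2 k2 where hk: "h1 \<in> H" "k1 \<in> K" "g1 = h1 \<otimes> k1"
      "h2 \<in> H" "k2 \<in> K" "g2 = h2 \<otimes> k2" using decomp by meson
    then have "g1 \<otimes> g2 = h1 \<otimes> (k1 \<otimes> h2) \<otimes> k2" by (simp add: m_assoc)
    also have "\<dots> = h1 \<otimes> (h2 \<otimes> k1) \<otimes> k2"
      using normal_subgroups_commute[OF H K HK(1) hk(4,2)] by simp
    also have "\<dots> = (h1 \<otimes> h2) \<otimes> (k1 \<otimes> k2)"
      using hk by (simp add: m_assoc)
    finally show "p (g1 \<otimes> g2) = p g1 \<otimes>\<^bsub>G\<lparr>carrier := K\<rparr>\<^esub> p g2"
      using hk p by simp
  qed
  moreover have "p k = k" if "k \<in> K" for k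
    using p[OF H.one_closed that] that by simp
  ultimately show ?thesis by blast
qed

lemma (in group) central_int_hom_if_direct_factor:
  assumes fg: "fin_gen_group G" and tf: "torsion_free G"
    and "has_nontrivial_abelian_direct_factor G"
  shows "\<exists>z \<in> center G. \<exists>\<psi> \<in> hom G integer_group. \<psi> z = 1"
proof -
  obtain H K where H: "H \<lhd> G" and K: "K \<lhd> G" and HK: "H \<inter> K = {\<one>}" "H <#> K = carrier G"
    and nontriv: "K \<noteq> {\<one>}" and comm: "comm_group (G\<lparr>carrier := K\<rparr>)"
    using assms(3) unfolding has_nontrivial_abelian_direct_factor_def by blast
  interpret K: comm_group "G\<lparr>carrier := K\<rparr>" by (rule comm)
  have subK: "subgroup K G" using K by (rule normal_imp_subgroup)
  obtain p where p: "p \<in> hom G (G\<lparr>carrier := K\<rparr>)" "\<And>k. k \<in> K \<Longrightarrow> p k = k"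
    using direct_factor_projection[OF H K HK] by blast
  have "p ` carrier G = K"
    using p hom_in_carrier[OF p(1)] subgroup.subset[OF subK] by (auto intro: rev_image_eqI)
  then have "fin_gen_group (G\<lparr>carrier := K\<rparr>)"
    using fin_gen_group_image[OF is_group K.is_group p(1) _ fg] by simp
  then obtain z \<phi> where z: "z \<in> K" and \<phi>: "\<phi> \<in> hom (G\<lparr>carrier := K\<rparr>) integer_group" "\<phi> z = 1"
    using K.exists_int_hom_eq_1 torsion_free_subgroup[OF tf subK] nontriv by auto
  have zG: "z \<in> carrier G" using z subgroup.subset[OF subK] by blast
  have "z \<otimes> g = g \<otimes> z" if "g \<in> carrier G" for g
  proof -
    from that HK(2) have "g \<in> H <#> K" by simp
    then obtain h k where hk: "h \<in> H" "k \<in> K" "g = h \<otimes> k" unfolding set_mult_def by blast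
    have G: "h \<in> carrier G" "k \<in> carrier G"
      using subgroup.mem_carrier[OF normal_imp_subgroup[OF H] hk(1)] subgroup.mem_carrier[OF subK hk(2)] .
    have "z \<otimes> g = h \<otimes> z \<otimes> k"
      using hk G zG normal_subgroups_commute[OF H K HK(1) hk(1) z] by (simp add: m_assoc)
    also have "\<dots> = g \<otimes> z"
      using hk G zG K.m_comm[of z k] z by (simp add: m_assoc)
    finally show ?thesis .
  qed
  with zG have "z \<in> center G" unfolding center_def by blast
  moreover have "\<phi> \<circ> p \<in> hom G integer_group" by (rule Group.hom_compose[OF p(1) \<phi>(1)])
  moreover have "(\<phi> \<circ> p) z = 1" using p(2)[OF z] \<phi>(2) by simp
  ultimately show ?thesis by blast
qed

section \<open>The torsion-free abelianization\<close>

lemma (in comm_group) subgroup_torsion_subgroup: "subgroup (torsion_subgroup G) G"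
proof (rule subgroupI)
  fix a b assume "a \<in> torsion_subgroup G" "b \<in> torsion_subgroup G"
  then obtain n m :: nat where a: "a \<in> carrier G" "n > 0" "a [^] n = \<one>"
    and b: "b \<in> carrier G" "m > 0" "b [^] m = \<one>"
    unfolding torsion_subgroup_def by blast
  have "inv a [^] n = \<one>" using a by (simp add: nat_pow_inv)
  then show "inv a \<in> torsion_subgroup G" using a unfolding torsion_subgroup_def by auto
  have "a [^] (n * m) = \<one>" using a nat_pow_pow[of a n m] by simp
  moreover have "b [^] (n * m) = \<one>" using b nat_pow_pow[of b m n] by (simp add: mult.commute)
  ultimately have "(a \<otimes> b) [^] (n * m) = \<one>" using a b by (simp add: nat_pow_distrib)
  then show "a \<otimes> b \<in> torsion_subgroup G"
    using a b unfolding torsion_subgroup_def by (auto intro!: exI[of _ "n * m"])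
qed (auto simp: torsion_subgroup_def intro!: exI[of _ "1::nat"])

lemma (in comm_group) torsion_free_Mod_torsion_subgroup:
  "torsion_free (G Mod torsion_subgroup G)"
  unfolding torsion_free_def
proof (intro ballI allI impI)
  let ?T = "torsion_subgroup G"
  have T: "subgroup ?T G" by (rule subgroup_torsion_subgroup)
  interpret T: normal ?T G using T by (rule subgroup_imp_normal)
  fix Y and n :: nat
  assume Y: "Y \<in> carrier (G Mod ?T)" and n: "0 < n \<and> Y [^]\<^bsub>G Mod ?T\<^esub> n = \<one>\<^bsub>G Mod ?T\<^esub>"
  obtain a where a: "a \<in> carrier G" "Y = ?T #> a" using Y unfolding FactGroup_def RCOSETS_def by auto
  have "?T #> a [^] n = ?T" using n a T.FactGroup_pow[OF a(1), of n] by simp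
  then have "a [^] n \<in> ?T" using coset_join1[OF _ _ T] a by simp
  then obtain m :: nat where "m > 0" "a [^] (n * m) = \<one>"
    unfolding torsion_subgroup_def using a by (auto simp: nat_pow_pow)
  then have "a \<in> ?T" using a n unfolding torsion_subgroup_def by (auto intro!: exI[of _ "n * m"])
  then show "Y = \<one>\<^bsub>G Mod ?T\<^esub>" using a T.rcos_const[OF is_group] by simp
qed

lemma (in group) int_hom_torsion_subgroup:
  assumes \<psi>: "\<psi> \<in> hom G integer_group" and x: "x \<in> torsion_subgroup G"
  shows "\<psi> x = 0"
proof -
  obtain n :: nat where "n > 0" "x \<in> carrier G" "x [^] n = \<one>"
    using x unfolding torsion_subgroup_def by blast
  then have "int n * \<psi> x = 0"
    using int_hom_int_pow[OF \<psi>, of x "int n"] int_hom_one[OF \<psi>] by (simp add: int_pow_int)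
  with \<open>n > 0\<close> show ?thesis by simp
qed

lemma (in group) int_hom_derived:
  assumes \<psi>: "\<psi> \<in> hom G integer_group"
  shows "derived G (carrier G) \<subseteq> kernel G integer_group \<psi>"
  unfolding derived_def
proof (rule generate_subgroup_incl)
  show "subgroup (kernel G integer_group \<psi>) G"
    by (rule group_hom.subgroup_kernel[OF group_homI[OF is_group group_integer_group \<psi>]])
  show "derived_set G (carrier G) \<subseteq> kernel G integer_group \<psi>"
    using \<psi> by (auto simp: kernel_def int_hom_mult int_hom_inv)
qed

definition torsion_free_abelianization :: "('a, 'b) monoid_scheme \<Rightarrow> 'a set set monoid" where
  "torsion_free_abelianization G = abelianization G Mod torsion_subgroup (abelianization G)"

definition torsion_free_abelianization_map :: "('a, 'b) monoid_scheme \<Rightarrow> 'a \<Rightarrow> 'a set set" where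
  "torsion_free_abelianization_map G g =
     torsion_subgroup (abelianization G) #>\<^bsub>abelianization G\<^esub> (derived G (carrier G) #>\<^bsub>G\<^esub> g)"

context group
begin

lemma comm_group_abelianization: "comm_group (abelianization G)"
  unfolding abelianization_def by (rule derived_quot_is_comm_group)

lemma torsion_free_abelianization_map_hom:
  "torsion_free_abelianization_map G \<in> hom G (torsion_free_abelianization G)"
proof -
  interpret A: comm_group "abelianization G" by (rule comm_group_abelianization)
  have "(\<lambda>a. torsion_subgroup (abelianization G) #>\<^bsub>abelianization G\<^esub> a) \<circ> (\<lambda>g. derived G (carrier G) #> g)
      \<in> hom G (torsion_free_abelianization G)"
    unfolding torsion_free_abelianization_def
    using Group.hom_compose[OF normal.r_coset_hom_Mod[OF derived_self_is_normal, folded abelianization_def]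
        normal.r_coset_hom_Mod[OF A.subgroup_imp_normal[OF A.subgroup_torsion_subgroup]]]
    by (simp add: abelianization_def)
  then show ?thesis by (simp add: o_def torsion_free_abelianization_map_def[abs_def])
qed

lemma torsion_free_abelianization_map_onto:
  "torsion_free_abelianization_map G ` carrier G = carrier (torsion_free_abelianization G)"
  unfolding torsion_free_abelianization_map_def torsion_free_abelianization_def abelianization_def
  by (simp only: carrier_FactGroup image_image)

lemma comm_group_torsion_free_abelianization: "comm_group (torsion_free_abelianization G)"
  unfolding torsion_free_abelianization_def
  using comm_group.abelian_FactGroup[OF comm_group_abelianization
      comm_group.subgroup_torsion_subgroup[OF comm_group_abelianization]] .

lemma torsion_free_torsion_free_abelianization: "torsion_free (torsion_free_abelianization G)"
  unfolding torsion_free_abelianization_def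
  by (rule comm_group.torsion_free_Mod_torsion_subgroup[OF comm_group_abelianization])

lemma fin_gen_torsion_free_abelianization:
  assumes "fin_gen_group G"
  shows "fin_gen_group (torsion_free_abelianization G)"
  by (rule fin_gen_group_image[OF is_group comm_group.axioms(2)[OF comm_group_torsion_free_abelianization]
        torsion_free_abelianization_map_hom torsion_free_abelianization_map_onto assms])

lemma int_hom_factors_through_torsion_free_abelianization:
  assumes \<psi>: "\<psi> \<in> hom G integer_group"
  obtains \<phi> where "\<phi> \<in> hom (torsion_free_abelianization G) integer_group"
    "\<And>g. g \<in> carrier G \<Longrightarrow> \<phi> (torsion_free_abelianization_map G g) = \<psi> g"
proof -
  interpret A: comm_group "abelianization G" by (rule comm_group_abelianization)
  obtain \<psi>A where \<psi>A: "\<psi>A \<in> hom (abelianization G) integer_group"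
    and \<psi>A_eq: "\<And>g. g \<in> carrier G \<Longrightarrow> \<psi>A (derived G (carrier G) #> g) = \<psi> g"
    using group_hom.FactGroup_universal_kernel[OF group_homI[OF is_group group_integer_group \<psi>]
        derived_self_is_normal int_hom_derived[OF \<psi>]]
    unfolding abelianization_def by metis
  have "torsion_subgroup (abelianization G) \<subseteq> kernel (abelianization G) integer_group \<psi>A"
    using A.int_hom_torsion_subgroup[OF \<psi>A] by (auto simp: kernel_def torsion_subgroup_def)
  then obtain \<phi> where "\<phi> \<in> hom (torsion_free_abelianization G) integer_group"
    and "\<And>a. a \<in> carrier (abelianization G) \<Longrightarrow>
       \<phi> (torsion_subgroup (abelianization G) #>\<^bsub>abelianization G\<^esub> a) = \<psi>A a"
    using group_hom.FactGroup_universal_kernel[OF group_homI[OF A.is_group group_integer_group \<psi>A]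
        A.subgroup_imp_normal[OF A.subgroup_torsion_subgroup]]
    unfolding torsion_free_abelianization_def by metis
  moreover have "derived G (carrier G) #> g \<in> carrier (abelianization G)" if "g \<in> carrier G" for g
    using that unfolding abelianization_def carrier_FactGroup by blast
  ultimately show ?thesis
    using that \<psi>A_eq unfolding torsion_free_abelianization_map_def by simp
qed

end

lemma (in group) primitive_in_abelianization_iff_int_hom:
  assumes fg: "fin_gen_group G" and z: "z \<in> carrier G"
  shows "primitive_elem (abelianization G) (derived G (carrier G) #> z) \<longleftrightarrow>
    (\<exists>\<psi> \<in> hom G integer_group. \<psi> z = 1)"
proof -
  let ?Q = "torsion_free_abelianization G" and ?\<pi> = "torsion_free_abelianization_map G"
  interpret Q: comm_group ?Q by (rule comm_group_torsion_free_abelianization)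
  have "derived G (carrier G) #> z \<in> carrier (abelianization G)"
    using z unfolding abelianization_def carrier_FactGroup by blast
  then have "primitive_elem (abelianization G) (derived G (carrier G) #> z) \<longleftrightarrow>
      extends_to_basis ?Q (?\<pi> z)"
    unfolding primitive_elem_def extends_to_basis_def torsion_free_abelianization_def
      torsion_free_abelianization_map_def by blast
  also have "\<dots> \<longleftrightarrow> (\<exists>\<phi> \<in> hom ?Q integer_group. \<phi> (?\<pi> z) = 1)"
    using torsion_free_abelianization_map_onto z
    by (intro Q.extends_to_basis_iff_int_hom_eq_1 torsion_free_torsion_free_abelianization
        fin_gen_torsion_free_abelianization[OF fg]) blast
  also have "\<dots> \<longleftrightarrow> (\<exists>\<psi> \<in> hom G integer_group. \<psi> z = 1)"
  proof
    assume "\<exists>\<phi> \<in> hom ?Q integer_group. \<phi> (?\<pi> z) = 1"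
    then obtain \<phi> where \<phi>: "\<phi> \<in> hom ?Q integer_group" "\<phi> (?\<pi> z) = 1" by blast
    have "\<phi> \<circ> ?\<pi> \<in> hom G integer_group"
      by (rule Group.hom_compose[OF torsion_free_abelianization_map_hom \<phi>(1)])
    with \<phi>(2) show "\<exists>\<psi> \<in> hom G integer_group. \<psi> z = 1"
      by (intro bexI[of _ "\<phi> \<circ> ?\<pi>"]) simp_all
  next
    assume "\<exists>\<psi> \<in> hom G integer_group. \<psi> z = 1"
    then obtain \<psi> where "\<psi> \<in> hom G integer_group" "\<psi> z = 1" by blast
    then obtain \<phi> where "\<phi> \<in> hom ?Q integer_group" "\<phi> (?\<pi> z) = \<psi> z"
      using int_hom_factors_through_torsion_free_abelianization z by metis
    with \<open>\<psi> z = 1\<close> show "\<exists>\<phi> \<in> hom ?Q integer_group. \<phi> (?\<pi> z) = 1" by auto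
  qed
  finally show ?thesis .
qed

lemma (in group) direct_factor_iff_central_int_hom:
  assumes "fin_gen_group G" "torsion_free G"
  shows "has_nontrivial_abelian_direct_factor G \<longleftrightarrow>
    (\<exists>z \<in> center G. \<exists>\<psi> \<in> hom G integer_group. \<psi> z = 1)"
  using central_int_hom_if_direct_factor[OF assms] direct_factor_if_central_int_hom by blast

theorem mainTheorem7:
  fixes G :: "('a, 'b) monoid_scheme"
  assumes "group G" and "fin_gen_group G" and "torsion_free G" and "nilpotent_group G"
  shows "has_nontrivial_abelian_direct_factor G \<longleftrightarrow>
         (\<exists>z \<in> center G. primitive_elem (abelianization G)
                            (derived G (carrier G) #>\<^bsub>G\<^esub> z))"
proof -
  interpret group G by fact
  have "has_nontrivial_abelian_direct_factor G \<longleftrightarrow>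
      (\<exists>z \<in> center G. \<exists>\<psi> \<in> hom G integer_group. \<psi> z = 1)"
    using direct_factor_iff_central_int_hom assms(2,3) .
  also have "\<dots> \<longleftrightarrow>
      (\<exists>z \<in> center G. primitive_elem (abelianization G) (derived G (carrier G) #>\<^bsub>G\<^esub> z))"
    using primitive_in_abelianization_iff_int_hom[OF assms(2)] unfolding center_def by auto
  finally show ?thesis .
qed

end
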